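(* Let $R$ be a ring, $M$ a nonzero left $R$-module, $\Omega$ an infinite set, and $E=\mathrm{End}_R(\bigoplus_{i\in\Omega}M)$ or $E=\mathrm{End}_R(\prod_{i\in\Omega}M)$. Suppose that $(R_i)_{i\in I}$ is a chain (totally ordered by inclusion) of subrings of $E$ such that $\bigcup_{i\in I}R_i=E$ and $|I|\le|\Omega|$. Then $E=R_i$ for some $i\in I$. In other words, $E$ is not the union of a chain of at most $|\Omega|$ proper subrings.
   Context: Rings are unital and associative; subrings of $E$ are understood as subrings of the ring $E$ (closed under addition, negation and multiplication and containing $0$ and $1$). *)

theory Defs
  imports "HOL-Algebra.Module" "HOL-Algebra.Subrings"
begin

text \<open>The library locale module requires a commutative ring, so we define
  the general notion with the same axioms but only assuming ring R.\<close>

locale left_module = R?: ring R + M?: abelian_group M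
  for R :: "('r, 'e) ring_scheme" (structure) and M :: "('r, 'm) module" (structure) +
  assumes smult_closed:
      "\<lbrakk> a \<in> carrier R; x \<in> carrier M \<rbrakk> \<Longrightarrow> a \<odot>\<^bsub>M\<^esub> x \<in> carrier M"
    and smult_l_distr:
      "\<lbrakk> a \<in> carrier R; b \<in> carrier R; x \<in> carrier M \<rbrakk> \<Longrightarrow>
      (a \<oplus> b) \<odot>\<^bsub>M\<^esub> x = a \<odot>\<^bsub>M\<^esub> x \<oplus>\<^bsub>M\<^esub> b \<odot>\<^bsub>M\<^esub> x"
    and smult_r_distr:
      "\<lbrakk> a \<in> carrier R; x \<in> carrier M; y \<in> carrier M \<rbrakk> \<Longrightarrow>
      a \<odot>\<^bsub>M\<^esub> (x \<oplus>\<^bsub>M\<^esub> y) = a \<odot>\<^bsub>M\<^esub> x \<oplus>\<^bsub>M\<^esub> a \<odot>\<^bsub>M\<^esub> y"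
    and smult_assoc1:
      "\<lbrakk> a \<in> carrier R; b \<in> carrier R; x \<in> carrier M \<rbrakk> \<Longrightarrow>
      (a \<otimes> b) \<odot>\<^bsub>M\<^esub> x = a \<odot>\<^bsub>M\<^esub> (b \<odot>\<^bsub>M\<^esub> x)"
    and smult_one:
      "x \<in> carrier M \<Longrightarrow> \<one> \<odot>\<^bsub>M\<^esub> x = x"

text \<open>Only the additive group and the scalar multiplication are meaningful;
  the ring-multiplication fields of the record are irrelevant.\<close>

definition direct_sum_mod :: "'o set \<Rightarrow> ('r, 'm) module \<Rightarrow> ('r, 'o \<Rightarrow> 'm) module" where
  "direct_sum_mod \<Omega> M =
    \<lparr> carrier = {f \<in> \<Omega> \<rightarrow>\<^sub>E carrier M. finite {i \<in> \<Omega>. f i \<noteq> \<zero>\<^bsub>M\<^esub>}},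
      mult = undefined, one = undefined,
      zero = (\<lambda>i\<in>\<Omega>. \<zero>\<^bsub>M\<^esub>),
      add = (\<lambda>f g. \<lambda>i\<in>\<Omega>. f i \<oplus>\<^bsub>M\<^esub> g i),
      smult = (\<lambda>r f. \<lambda>i\<in>\<Omega>. r \<odot>\<^bsub>M\<^esub> f i) \<rparr>"

definition direct_prod_mod :: "'o set \<Rightarrow> ('r, 'm) module \<Rightarrow> ('r, 'o \<Rightarrow> 'm) module" where
  "direct_prod_mod \<Omega> M =
    \<lparr> carrier = \<Omega> \<rightarrow>\<^sub>E carrier M,
      mult = undefined, one = undefined,
      zero = (\<lambda>i\<in>\<Omega>. \<zero>\<^bsub>M\<^esub>),
      add = (\<lambda>f g. \<lambda>i\<in>\<Omega>. f i \<oplus>\<^bsub>M\<^esub> g i),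
      smult = (\<lambda>r f. \<lambda>i\<in>\<Omega>. r \<odot>\<^bsub>M\<^esub> f i) \<rparr>"

definition module_endos :: "('r, 'e) ring_scheme \<Rightarrow> ('r, 'n) module \<Rightarrow> ('n \<Rightarrow> 'n) set" where
  "module_endos R N =
    {\<phi>. \<phi> \<in> carrier N \<rightarrow>\<^sub>E carrier N \<and>
         (\<forall>x\<in>carrier N. \<forall>y\<in>carrier N. \<phi> (x \<oplus>\<^bsub>N\<^esub> y) = \<phi> x \<oplus>\<^bsub>N\<^esub> \<phi> y) \<and>
         (\<forall>r\<in>carrier R. \<forall>x\<in>carrier N. \<phi> (r \<odot>\<^bsub>N\<^esub> x) = r \<odot>\<^bsub>N\<^esub> \<phi> x)}"

definition End_ring :: "('r, 'e) ring_scheme \<Rightarrow> ('r, 'n) module \<Rightarrow> ('n \<Rightarrow> 'n) ring" where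
  "End_ring R N =
    \<lparr> carrier = module_endos R N,
      mult = (\<lambda>\<phi> \<psi>. compose (carrier N) \<phi> \<psi>),
      one = (\<lambda>x\<in>carrier N. x),
      zero = (\<lambda>x\<in>carrier N. \<zero>\<^bsub>N\<^esub>),
      add = (\<lambda>\<phi> \<psi>. \<lambda>x\<in>carrier N. \<phi> x \<oplus>\<^bsub>N\<^esub> \<psi> x) \<rparr>"

end

theory Submission
  imports Defs
begin

text \<open>Since \<open>\<Omega>\<close> is infinite and \<open>|I| \<le> |\<Omega>|\<close>, there is an injection \<open>g : I \<times> \<Omega> \<rightarrow> \<Omega>\<close>; it
  splits the coordinates into \<open>|I|\<close> blocks, each a copy of \<open>\<Omega>\<close>. Reading off block \<open>j\<close> and
  writing into block \<open>j\<close> are endomorphisms \<open>p\<^sub>j\<close> and \<open>q\<^sub>j\<close>, and every family \<open>(y\<^sub>j)\<^sub>j\<^sub>\<in>\<^sub>I\<close> of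
  endomorphisms is realised as \<open>y\<^sub>j = p\<^sub>j d q\<^sub>j\<close> by one block diagonal endomorphism \<open>d\<close>.
  If \<open>E \<noteq> p\<^sub>j S\<^sub>j q\<^sub>j\<close> for every \<open>j\<close>, pick \<open>y\<^sub>j \<notin> p\<^sub>j S\<^sub>j q\<^sub>j\<close>; the diagonal \<open>d\<close> lies in some \<open>S\<^sub>i\<close>,
  so \<open>y\<^sub>i \<in> p\<^sub>i S\<^sub>i q\<^sub>i\<close>, a contradiction. Hence \<open>E = p\<^sub>j S\<^sub>j q\<^sub>j\<close> for some \<open>j\<close>, and the member of
  the chain containing \<open>S\<^sub>j\<close>, \<open>p\<^sub>j\<close> and \<open>q\<^sub>j\<close> is all of \<open>E\<close>.\<close>

lemma covering_submonoid_chain_improper: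
  fixes G :: "('a, 'b) monoid_scheme" and S :: "'j \<Rightarrow> 'a set"
  assumes sub: "\<forall>i\<in>I. submonoid (S i) G"
    and chain: "\<forall>i\<in>I. \<forall>j\<in>I. S i \<subseteq> S j \<or> S j \<subseteq> S i"
    and cover: "(\<Union>i\<in>I. S i) = carrier G"
    and p: "p \<in> I \<rightarrow> carrier G" and q: "q \<in> I \<rightarrow> carrier G"
    and diagonal: "\<And>y. y \<in> I \<rightarrow> carrier G \<Longrightarrow> \<exists>d\<in>carrier G. \<forall>j\<in>I. p j \<otimes>\<^bsub>G\<^esub> d \<otimes>\<^bsub>G\<^esub> q j = y j"
  shows "\<exists>i\<in>I. S i = carrier G"
proof -
  have "\<exists>j\<in>I. \<forall>y\<in>carrier G. \<exists>z\<in>S j. y = p j \<otimes>\<^bsub>G\<^esub> z \<otimes>\<^bsub>G\<^esub> q j"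
  proof (rule ccontr)
    assume "\<not> ?thesis"
    then have "\<forall>j\<in>I. \<exists>y\<in>carrier G. \<forall>z\<in>S j. y \<noteq> p j \<otimes>\<^bsub>G\<^esub> z \<otimes>\<^bsub>G\<^esub> q j"
      by blast
    then obtain y where y: "y \<in> I \<rightarrow> carrier G"
      and avoids: "\<And>j z. j \<in> I \<Longrightarrow> z \<in> S j \<Longrightarrow> y j \<noteq> p j \<otimes>\<^bsub>G\<^esub> z \<otimes>\<^bsub>G\<^esub> q j"
      by (metis Pi_I)
    obtain d where "d \<in> carrier G" and d: "\<forall>j\<in>I. p j \<otimes>\<^bsub>G\<^esub> d \<otimes>\<^bsub>G\<^esub> q j = y j"
      using diagonal[OF y] by blast
    then obtain i where "i \<in> I" "d \<in> S i"
      using cover by blast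
    then show False
      using avoids d by metis
  qed
  then obtain j where j: "j \<in> I"
    and factor: "\<forall>y\<in>carrier G. \<exists>z\<in>S j. y = p j \<otimes>\<^bsub>G\<^esub> z \<otimes>\<^bsub>G\<^esub> q j"
    by blast
  obtain a b where a: "a \<in> I" "p j \<in> S a" and b: "b \<in> I" "q j \<in> S b"
    using cover p q j by blast
  have upper_bound: "\<exists>k\<in>I. S i \<subseteq> S k \<and> S i' \<subseteq> S k" if "i \<in> I" "i' \<in> I" for i i'
    using chain that by blast
  obtain k' where k': "k' \<in> I" "S j \<subseteq> S k'" "S a \<subseteq> S k'"
    using upper_bound[OF j a(1)] by blast
  obtain k where k: "k \<in> I" "S j \<subseteq> S k" "S a \<subseteq> S k" "S b \<subseteq> S k"
    using upper_bound[OF k'(1) b(1)] k'(2,3) by blast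
  interpret submonoid "S k" G
    using sub k(1) by blast
  have "carrier G \<subseteq> S k"
  proof
    fix y
    assume "y \<in> carrier G"
    then obtain z where "z \<in> S j" "y = p j \<otimes>\<^bsub>G\<^esub> z \<otimes>\<^bsub>G\<^esub> q j"
      using factor by blast
    then show "y \<in> S k"
      using a(2) b(2) k(2-4) by auto
  qed
  then show ?thesis
    using subset k(1) by blast
qed

lemma (in left_module) smult_r_null [simp]: "a \<in> carrier R \<Longrightarrow> a \<odot>\<^bsub>M\<^esub> \<zero>\<^bsub>M\<^esub> = \<zero>\<^bsub>M\<^esub>"
  by (metis M.add.l_cancel_one M.zero_closed smult_closed smult_r_distr)

locale power_module = left_module R M
  for R :: "('r, 'e) ring_scheme" and M :: "('r, 'm) module" +
  fixes \<Omega> :: "'o set" and finsupp :: bool and N :: "('r, 'o \<Rightarrow> 'm) module"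
  assumes carrier_N: "carrier N = {f \<in> \<Omega> \<rightarrow>\<^sub>E carrier M. finsupp \<longrightarrow> finite {x \<in> \<Omega>. f x \<noteq> \<zero>\<^bsub>M\<^esub>}}"
    and add_N: "v \<oplus>\<^bsub>N\<^esub> w = (\<lambda>x\<in>\<Omega>. v x \<oplus>\<^bsub>M\<^esub> w x)"
    and smult_N: "r \<odot>\<^bsub>N\<^esub> v = (\<lambda>x\<in>\<Omega>. r \<odot>\<^bsub>M\<^esub> v x)"
begin

definition supp :: "('o \<Rightarrow> 'm) \<Rightarrow> 'o set" where
  "supp v = {x \<in> \<Omega>. v x \<noteq> \<zero>\<^bsub>M\<^esub>}"

lemma carrier_NI:
  assumes "v \<in> extensional \<Omega>" and "\<And>x. x \<in> \<Omega> \<Longrightarrow> v x \<in> carrier M"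
    and "finsupp \<Longrightarrow> finite (supp v)"
  shows "v \<in> carrier N"
  using assms unfolding carrier_N supp_def by (auto simp: PiE_iff)

lemma carrier_ND:
  assumes "v \<in> carrier N"
  shows carrier_N_extensional: "v \<in> extensional \<Omega>"
    and carrier_N_coord: "x \<in> \<Omega> \<Longrightarrow> v x \<in> carrier M"
    and carrier_N_finite_supp: "finsupp \<Longrightarrow> finite (supp v)"
  using assms unfolding carrier_N supp_def by (auto simp: PiE_iff)

lemma add_closed_N:
  assumes "v \<in> carrier N" and "w \<in> carrier N"
  shows "v \<oplus>\<^bsub>N\<^esub> w \<in> carrier N"
proof (rule carrier_NI)
  have "supp (v \<oplus>\<^bsub>N\<^esub> w) \<subseteq> supp v \<union> supp w"
    using assms by (auto simp: supp_def add_N carrier_N_coord)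
  then show "finsupp \<Longrightarrow> finite (supp (v \<oplus>\<^bsub>N\<^esub> w))"
    using assms by (meson carrier_N_finite_supp finite_UnI finite_subset)
qed (use assms in \<open>auto simp: add_N carrier_N_coord\<close>)

lemma smult_closed_N:
  assumes "r \<in> carrier R" and "v \<in> carrier N"
  shows "r \<odot>\<^bsub>N\<^esub> v \<in> carrier N"
proof (rule carrier_NI)
  have "supp (r \<odot>\<^bsub>N\<^esub> v) \<subseteq> supp v"
    using assms by (auto simp: supp_def smult_N)
  then show "finsupp \<Longrightarrow> finite (supp (r \<odot>\<^bsub>N\<^esub> v))"
    using assms by (meson carrier_N_finite_supp finite_subset)
qed (use assms in \<open>auto simp: smult_N carrier_N_coord smult_closed\<close>)

lemma module_endosD:
  assumes "\<phi> \<in> module_endos R N"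
  shows module_endos_closed: "v \<in> carrier N \<Longrightarrow> \<phi> v \<in> carrier N"
    and module_endos_undefined: "v \<notin> carrier N \<Longrightarrow> \<phi> v = undefined"
    and module_endos_add: "v \<in> carrier N \<Longrightarrow> w \<in> carrier N \<Longrightarrow> \<phi> (v \<oplus>\<^bsub>N\<^esub> w) = \<phi> v \<oplus>\<^bsub>N\<^esub> \<phi> w"
    and module_endos_smult: "r \<in> carrier R \<Longrightarrow> v \<in> carrier N \<Longrightarrow> \<phi> (r \<odot>\<^bsub>N\<^esub> v) = r \<odot>\<^bsub>N\<^esub> \<phi> v"
  using assms unfolding module_endos_def by auto

lemma module_endos_zero:
  assumes \<phi>: "\<phi> \<in> module_endos R N"
  shows "\<phi> (\<lambda>x\<in>\<Omega>. \<zero>\<^bsub>M\<^esub>) = (\<lambda>x\<in>\<Omega>. \<zero>\<^bsub>M\<^esub>)"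
proof -
  let ?zero = "\<lambda>x\<in>\<Omega>. \<zero>\<^bsub>M\<^esub>"
  have zero: "?zero \<in> carrier N"
    by (rule carrier_NI) (auto simp: supp_def)
  have "?zero \<oplus>\<^bsub>N\<^esub> ?zero = ?zero"
    unfolding add_N by (rule restrict_ext) simp
  then have idem: "\<phi> ?zero = \<phi> ?zero \<oplus>\<^bsub>N\<^esub> \<phi> ?zero"
    using module_endos_add[OF \<phi> zero zero] by simp
  show ?thesis
  proof (rule extensionalityI[OF carrier_N_extensional[OF module_endos_closed[OF \<phi> zero]]])
    fix x
    assume x: "x \<in> \<Omega>"
    have "\<phi> ?zero x = \<phi> ?zero x \<oplus>\<^bsub>M\<^esub> \<phi> ?zero x"
      using fun_cong[OF idem, of x] x by (simp add: add_N)
    then show "\<phi> ?zero x = ?zero x"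
      using carrier_N_coord[OF module_endos_closed[OF \<phi> zero] x] x by simp
  qed simp
qed

lemma module_endosI_coordinatewise:
  assumes closed: "\<And>v. v \<in> carrier N \<Longrightarrow> \<phi> v \<in> carrier N"
    and extensional: "\<phi> \<in> extensional (carrier N)"
    and add: "\<And>v w x. v \<in> carrier N \<Longrightarrow> w \<in> carrier N \<Longrightarrow> x \<in> \<Omega> \<Longrightarrow>
      \<phi> (v \<oplus>\<^bsub>N\<^esub> w) x = \<phi> v x \<oplus>\<^bsub>M\<^esub> \<phi> w x"
    and smult: "\<And>r v x. r \<in> carrier R \<Longrightarrow> v \<in> carrier N \<Longrightarrow> x \<in> \<Omega> \<Longrightarrow>
      \<phi> (r \<odot>\<^bsub>N\<^esub> v) x = r \<odot>\<^bsub>M\<^esub> \<phi> v x"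
  shows "\<phi> \<in> module_endos R N"
  unfolding module_endos_def
proof (intro CollectI conjI ballI PiE_I closed)
  fix v w
  assume v: "v \<in> carrier N" and w: "w \<in> carrier N"
  show "\<phi> (v \<oplus>\<^bsub>N\<^esub> w) = \<phi> v \<oplus>\<^bsub>N\<^esub> \<phi> w"
  proof (rule extensionalityI[of _ \<Omega>])
    fix x
    assume "x \<in> \<Omega>"
    then show "\<phi> (v \<oplus>\<^bsub>N\<^esub> w) x = (\<phi> v \<oplus>\<^bsub>N\<^esub> \<phi> w) x"
      using add[OF v w] by (simp add: add_N)
  qed (use closed v w add_closed_N carrier_N_extensional in \<open>auto simp: add_N\<close>)
next
  fix r v
  assume r: "r \<in> carrier R" and v: "v \<in> carrier N"
  show "\<phi> (r \<odot>\<^bsub>N\<^esub> v) = r \<odot>\<^bsub>N\<^esub> \<phi> v"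
  proof (rule extensionalityI[of _ \<Omega>])
    fix x
    assume "x \<in> \<Omega>"
    then show "\<phi> (r \<odot>\<^bsub>N\<^esub> v) x = (r \<odot>\<^bsub>N\<^esub> \<phi> v) x"
      using smult[OF r v] by (simp add: smult_N)
  qed (use closed r v smult_closed_N carrier_N_extensional in \<open>auto simp: smult_N\<close>)
qed (use extensional in \<open>auto simp: extensional_def\<close>)

end

locale block_decomposition = power_module R M \<Omega> finsupp N
  for R :: "('r, 'e) ring_scheme" and M :: "('r, 'm) module"
    and \<Omega> :: "'o set" and finsupp :: bool and N :: "('r, 'o \<Rightarrow> 'm) module" +
  fixes I :: "'j set" and g :: "'j \<times> 'o \<Rightarrow> 'o"
  assumes inj_g: "inj_on g (I \<times> \<Omega>)" and g_into: "g ` (I \<times> \<Omega>) \<subseteq> \<Omega>"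
begin

definition block_proj :: "'j \<Rightarrow> ('o \<Rightarrow> 'm) \<Rightarrow> 'o \<Rightarrow> 'm" where
  "block_proj j = (\<lambda>v\<in>carrier N. \<lambda>z\<in>\<Omega>. v (g (j, z)))"

definition block_incl :: "'j \<Rightarrow> ('o \<Rightarrow> 'm) \<Rightarrow> 'o \<Rightarrow> 'm" where
  "block_incl j = (\<lambda>v\<in>carrier N. \<lambda>x\<in>\<Omega>.
     if x \<in> g ` ({j} \<times> \<Omega>) then v (snd (the_inv_into (I \<times> \<Omega>) g x)) else \<zero>\<^bsub>M\<^esub>)"

definition block_diag :: "('j \<Rightarrow> ('o \<Rightarrow> 'm) \<Rightarrow> 'o \<Rightarrow> 'm) \<Rightarrow> ('o \<Rightarrow> 'm) \<Rightarrow> 'o \<Rightarrow> 'm" where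
  "block_diag y = (\<lambda>v\<in>carrier N. \<lambda>x\<in>\<Omega>.
     if x \<in> g ` (I \<times> \<Omega>)
     then (case the_inv_into (I \<times> \<Omega>) g x of (j, z) \<Rightarrow> y j (block_proj j v) z)
     else \<zero>\<^bsub>M\<^esub>)"

lemma g_in: "j \<in> I \<Longrightarrow> z \<in> \<Omega> \<Longrightarrow> g (j, z) \<in> \<Omega>"
  using g_into by blast

lemma the_inv_into_g: "j \<in> I \<Longrightarrow> z \<in> \<Omega> \<Longrightarrow> the_inv_into (I \<times> \<Omega>) g (g (j, z)) = (j, z)"
  using inj_g by (simp add: the_inv_into_f_f)

lemma block_proj_apply: "v \<in> carrier N \<Longrightarrow> z \<in> \<Omega> \<Longrightarrow> block_proj j v z = v (g (j, z))"
  by (simp add: block_proj_def)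

lemma block_incl_apply_block:
  "j \<in> I \<Longrightarrow> z \<in> \<Omega> \<Longrightarrow> v \<in> carrier N \<Longrightarrow> block_incl j v (g (j, z)) = v z"
  by (simp add: block_incl_def g_in the_inv_into_g)

lemma block_incl_apply_outside:
  "x \<in> \<Omega> \<Longrightarrow> x \<notin> g ` ({j} \<times> \<Omega>) \<Longrightarrow> v \<in> carrier N \<Longrightarrow> block_incl j v x = \<zero>\<^bsub>M\<^esub>"
  by (simp add: block_incl_def)

lemma block_diag_apply_block:
  "j \<in> I \<Longrightarrow> z \<in> \<Omega> \<Longrightarrow> v \<in> carrier N \<Longrightarrow> block_diag y v (g (j, z)) = y j (block_proj j v) z"
  by (simp add: block_diag_def g_in the_inv_into_g)

lemma block_diag_apply_outside:
  "x \<in> \<Omega> \<Longrightarrow> x \<notin> g ` (I \<times> \<Omega>) \<Longrightarrow> v \<in> carrier N \<Longrightarrow> block_diag y v x = \<zero>\<^bsub>M\<^esub>"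
  by (simp add: block_diag_def)

lemma block_proj_closed:
  assumes j: "j \<in> I" and v: "v \<in> carrier N"
  shows "block_proj j v \<in> carrier N"
proof (rule carrier_NI)
  have "inj_on (\<lambda>z. g (j, z)) \<Omega>"
    using inj_g j by (auto simp: inj_on_def)
  moreover have "supp (block_proj j v) = (\<lambda>z. g (j, z)) -` supp v \<inter> \<Omega>"
    using v j by (auto simp: supp_def block_proj_apply g_in)
  ultimately show "finsupp \<Longrightarrow> finite (supp (block_proj j v))"
    using carrier_N_finite_supp[OF v] by (simp add: finite_vimage_IntI)
qed (use j v in \<open>auto simp: block_proj_def carrier_N_coord g_in\<close>)

lemma block_proj_endo:
  assumes j: "j \<in> I"
  shows "block_proj j \<in> module_endos R N"
proof (rule module_endosI_coordinatewise)
  fix v w x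
  assume v: "v \<in> carrier N" and w: "w \<in> carrier N" and x: "x \<in> \<Omega>"
  show "block_proj j (v \<oplus>\<^bsub>N\<^esub> w) x = block_proj j v x \<oplus>\<^bsub>M\<^esub> block_proj j w x"
    using block_proj_apply[OF add_closed_N[OF v w] x] v w x j by (simp add: block_proj_apply add_N g_in)
next
  fix r v x
  assume r: "r \<in> carrier R" and v: "v \<in> carrier N" and x: "x \<in> \<Omega>"
  show "block_proj j (r \<odot>\<^bsub>N\<^esub> v) x = r \<odot>\<^bsub>M\<^esub> block_proj j v x"
    using block_proj_apply[OF smult_closed_N[OF r v] x] v x j by (simp add: block_proj_apply smult_N g_in)
qed (simp_all add: block_proj_closed j, simp add: block_proj_def)

lemma block_incl_closed:
  assumes j: "j \<in> I" and v: "v \<in> carrier N"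
  shows "block_incl j v \<in> carrier N"
proof (rule carrier_NI)
  have "supp (block_incl j v) \<subseteq> (\<lambda>z. g (j, z)) ` supp v"
  proof
    fix x
    assume x: "x \<in> supp (block_incl j v)"
    then have "x \<in> g ` ({j} \<times> \<Omega>)"
      using block_incl_apply_outside[OF _ _ v] by (force simp: supp_def)
    then show "x \<in> (\<lambda>z. g (j, z)) ` supp v"
      using x j v by (auto simp: supp_def block_incl_apply_block)
  qed
  then show "finsupp \<Longrightarrow> finite (supp (block_incl j v))"
    using carrier_N_finite_supp[OF v] finite_surj by blast
next
  show "block_incl j v x \<in> carrier M" if "x \<in> \<Omega>" for x
    using that j v by (cases "x \<in> g ` ({j} \<times> \<Omega>)")
      (auto simp: block_incl_apply_block block_incl_apply_outside carrier_N_coord)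
qed (simp add: block_incl_def v)

lemma block_incl_endo:
  assumes j: "j \<in> I"
  shows "block_incl j \<in> module_endos R N"
proof (rule module_endosI_coordinatewise)
  fix v w x
  assume v: "v \<in> carrier N" and w: "w \<in> carrier N" and x: "x \<in> \<Omega>"
  show "block_incl j (v \<oplus>\<^bsub>N\<^esub> w) x = block_incl j v x \<oplus>\<^bsub>M\<^esub> block_incl j w x"
    using x j v w add_closed_N[OF v w] by (cases "x \<in> g ` ({j} \<times> \<Omega>)")
      (auto simp: block_incl_apply_block block_incl_apply_outside add_N)
next
  fix r v x
  assume r: "r \<in> carrier R" and v: "v \<in> carrier N" and x: "x \<in> \<Omega>"
  show "block_incl j (r \<odot>\<^bsub>N\<^esub> v) x = r \<odot>\<^bsub>M\<^esub> block_incl j v x"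
    using x j r v smult_closed_N[OF r v] by (cases "x \<in> g ` ({j} \<times> \<Omega>)")
      (auto simp: block_incl_apply_block block_incl_apply_outside smult_N)
qed (simp_all add: block_incl_closed j, simp add: block_incl_def)

lemma block_proj_incl:
  assumes j: "j \<in> I" and v: "v \<in> carrier N"
  shows "block_proj j (block_incl j v) = v"
proof (rule extensionalityI[OF _ carrier_N_extensional[OF v]])
  show "block_proj j (block_incl j v) \<in> extensional \<Omega>"
    using carrier_N_extensional[OF block_proj_closed[OF j block_incl_closed[OF j v]]] .
qed (simp add: block_proj_apply block_incl_closed block_incl_apply_block j v)

lemma block_diag_closed:
  assumes y: "y \<in> I \<rightarrow> module_endos R N" and v: "v \<in> carrier N"
  shows "block_diag y v \<in> carrier N"
proof (rule carrier_NI)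
  show "block_diag y v x \<in> carrier M" if x: "x \<in> \<Omega>" for x
  proof (cases "x \<in> g ` (I \<times> \<Omega>)")
    case True
    then obtain j z where "j \<in> I" "z \<in> \<Omega>" "x = g (j, z)"
      by blast
    then show ?thesis
      using y v by (simp add: block_diag_apply_block carrier_N_coord module_endos_closed
          block_proj_closed Pi_iff)
  qed (simp add: block_diag_apply_outside x v)
next
  assume finsupp
  define J where "J = fst ` (g -` supp v \<inter> (I \<times> \<Omega>))"
  have "finite J"
    unfolding J_def
    using finite_vimage_IntI[OF carrier_N_finite_supp[OF v \<open>finsupp\<close>] inj_g] by blast
  have J_sub: "J \<subseteq> I"
    by (auto simp: J_def)
  have block_proj_zero: "block_proj j v = (\<lambda>z\<in>\<Omega>. \<zero>\<^bsub>M\<^esub>)" if "j \<in> I" "j \<notin> J" for j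
  proof (rule extensionalityI[OF carrier_N_extensional[OF block_proj_closed[OF that(1) v]]])
    fix z
    assume z: "z \<in> \<Omega>"
    then have "(j, z) \<notin> g -` supp v \<inter> (I \<times> \<Omega>)"
      using that by (force simp: J_def)
    then show "block_proj j v z = (\<lambda>z\<in>\<Omega>. \<zero>\<^bsub>M\<^esub>) z"
      using that(1) z v by (simp add: supp_def block_proj_apply g_in)
  qed simp
  have "supp (block_diag y v) \<subseteq> g ` (SIGMA j:J. supp (y j (block_proj j v)))"
  proof
    fix x
    assume x: "x \<in> supp (block_diag y v)"
    then obtain j z where jz: "j \<in> I" "z \<in> \<Omega>" "x = g (j, z)"
      using block_diag_apply_outside[OF _ _ v] by (force simp: supp_def)
    then have "z \<in> supp (y j (block_proj j v))"
      using x v by (simp add: supp_def block_diag_apply_block)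
    moreover from this have "j \<in> J"
      using block_proj_zero[OF jz(1)] module_endos_zero y jz(1) by (force simp: supp_def)
    ultimately show "x \<in> g ` (SIGMA j:J. supp (y j (block_proj j v)))"
      using jz(3) by blast
  qed
  moreover have "finite (SIGMA j:J. supp (y j (block_proj j v)))"
  proof (rule finite_SigmaI[OF \<open>finite J\<close>])
    fix j
    assume "j \<in> J"
    then have "y j \<in> module_endos R N" "block_proj j v \<in> carrier N"
      using J_sub y block_proj_closed[OF _ v] by blast+
    then show "finite (supp (y j (block_proj j v)))"
      using carrier_N_finite_supp module_endos_closed \<open>finsupp\<close> by blast
  qed
  ultimately show "finite (supp (block_diag y v))"
    using finite_surj by blast
qed (simp add: block_diag_def v)

lemma block_diag_endo:
  assumes y: "y \<in> I \<rightarrow> module_endos R N"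
  shows "block_diag y \<in> module_endos R N"
proof (rule module_endosI_coordinatewise)
  fix v w x
  assume v: "v \<in> carrier N" and w: "w \<in> carrier N" and x: "x \<in> \<Omega>"
  show "block_diag y (v \<oplus>\<^bsub>N\<^esub> w) x = block_diag y v x \<oplus>\<^bsub>M\<^esub> block_diag y w x"
  proof (cases "x \<in> g ` (I \<times> \<Omega>)")
    case True
    then obtain j z where jz: "j \<in> I" "z \<in> \<Omega>" "x = g (j, z)"
      by blast
    then have "y j (block_proj j (v \<oplus>\<^bsub>N\<^esub> w)) = y j (block_proj j v) \<oplus>\<^bsub>N\<^esub> y j (block_proj j w)"
      using y v w by (simp add: Pi_iff module_endos_add block_proj_endo block_proj_closed)
    then show ?thesis
      using jz v w block_diag_apply_block[OF jz(1,2) add_closed_N[OF v w]]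
      by (simp add: block_diag_apply_block add_N)
  qed (simp add: block_diag_apply_outside x v w add_closed_N)
next
  fix r v x
  assume r: "r \<in> carrier R" and v: "v \<in> carrier N" and x: "x \<in> \<Omega>"
  show "block_diag y (r \<odot>\<^bsub>N\<^esub> v) x = r \<odot>\<^bsub>M\<^esub> block_diag y v x"
  proof (cases "x \<in> g ` (I \<times> \<Omega>)")
    case True
    then obtain j z where jz: "j \<in> I" "z \<in> \<Omega>" "x = g (j, z)"
      by blast
    then have "y j (block_proj j (r \<odot>\<^bsub>N\<^esub> v)) = r \<odot>\<^bsub>N\<^esub> y j (block_proj j v)"
      using y r v by (simp add: Pi_iff module_endos_smult block_proj_endo block_proj_closed)
    then show ?thesis
      using jz r v block_diag_apply_block[OF jz(1,2) smult_closed_N[OF r v]]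
      by (simp add: block_diag_apply_block smult_N)
  qed (simp add: block_diag_apply_outside x r v smult_closed_N)
qed (simp_all add: block_diag_closed y, simp add: block_diag_def)

lemma block_proj_diag_incl:
  assumes y: "y \<in> I \<rightarrow> module_endos R N" and j: "j \<in> I"
  shows "compose (carrier N) (compose (carrier N) (block_proj j) (block_diag y)) (block_incl j) = y j"
proof
  fix v
  have yj: "y j \<in> module_endos R N"
    using y j by blast
  show "compose (carrier N) (compose (carrier N) (block_proj j) (block_diag y)) (block_incl j) v = y j v"
  proof (cases "v \<in> carrier N")
    case True
    have "block_proj j (block_diag y (block_incl j v)) = y j v"
    proof (rule extensionalityI[of _ \<Omega>])
      fix z
      assume "z \<in> \<Omega>"
      then show "block_proj j (block_diag y (block_incl j v)) z = y j v z"
        using j True by (simp add: block_proj_apply block_diag_apply_block block_diag_closed[OF y]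
            block_incl_closed block_proj_incl)
    qed (use carrier_N_extensional block_proj_closed[OF j] block_diag_closed[OF y]
          block_incl_closed[OF j True] module_endos_closed[OF yj True] in blast)+
    then show ?thesis
      using True j by (simp add: compose_def block_incl_closed block_diag_closed[OF y])
  qed (simp add: compose_def module_endos_undefined[OF yj])
qed

lemma covering_subring_chain_improper:
  fixes S :: "'j \<Rightarrow> (('o \<Rightarrow> 'm) \<Rightarrow> 'o \<Rightarrow> 'm) set"
  assumes sub: "\<forall>i\<in>I. subring (S i) (End_ring R N)"
    and chain: "\<forall>i\<in>I. \<forall>j\<in>I. S i \<subseteq> S j \<or> S j \<subseteq> S i"
    and cover: "(\<Union>i\<in>I. S i) = carrier (End_ring R N)"
  shows "\<exists>i\<in>I. S i = carrier (End_ring R N)"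
proof (rule covering_submonoid_chain_improper[OF _ chain cover, where p = block_proj and q = block_incl])
  show "\<forall>i\<in>I. submonoid (S i) (End_ring R N)"
    using sub by (simp add: subring_def)
  show "block_proj \<in> I \<rightarrow> carrier (End_ring R N)" "block_incl \<in> I \<rightarrow> carrier (End_ring R N)"
    by (simp_all add: End_ring_def block_proj_endo block_incl_endo)
  show "\<exists>d\<in>carrier (End_ring R N). \<forall>j\<in>I.
      block_proj j \<otimes>\<^bsub>End_ring R N\<^esub> d \<otimes>\<^bsub>End_ring R N\<^esub> block_incl j = y j"
    if "y \<in> I \<rightarrow> carrier (End_ring R N)" for y
  proof
    show "block_diag y \<in> carrier (End_ring R N)"
      using that block_diag_endo by (simp add: End_ring_def)
  qed (use that block_proj_diag_incl in \<open>simp add: End_ring_def\<close>)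
qed

end

lemma infinite_absorbs_Times:
  assumes "infinite \<Omega>" and "\<exists>f. inj_on f I \<and> f ` I \<subseteq> \<Omega>"
  shows "\<exists>g. inj_on g (I \<times> \<Omega>) \<and> g ` (I \<times> \<Omega>) \<subseteq> \<Omega>"
proof (rule card_of_ordLeq[THEN iffD2])
  include cardinal_syntax
  have "|I| \<le>o |\<Omega>|"
    by (rule card_of_ordLeq[THEN iffD1, OF assms(2)])
  then show "|I \<times> \<Omega>| \<le>o |\<Omega>|"
    by (rule ordLeq_ordIso_trans[OF card_of_Times_mono1 card_of_Times_same_infinite[OF assms(1)]])
qed

theorem theorem3:
  fixes R :: "('r, 'e) ring_scheme"
    and M :: "('r, 'm) module"
    and \<Omega> :: "'o set"
    and E :: "(('o \<Rightarrow> 'm) \<Rightarrow> ('o \<Rightarrow> 'm)) ring"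
    and I :: "'j set"
    and S :: "'j \<Rightarrow> (('o \<Rightarrow> 'm) \<Rightarrow> ('o \<Rightarrow> 'm)) set"
  assumes "left_module R M"
    and "carrier M \<noteq> {\<zero>\<^bsub>M\<^esub>}"
    and "infinite \<Omega>"
    and "E = End_ring R (direct_sum_mod \<Omega> M) \<or> E = End_ring R (direct_prod_mod \<Omega> M)"
    and "\<forall>i\<in>I. subring (S i) E"
    and "\<forall>i\<in>I. \<forall>j\<in>I. S i \<subseteq> S j \<or> S j \<subseteq> S i"
    and "(\<Union>i\<in>I. S i) = carrier E"
    and "\<exists>f. inj_on f I \<and> f ` I \<subseteq> \<Omega>"
  shows "\<exists>i\<in>I. S i = carrier E"
proof -
  obtain g where g: "inj_on g (I \<times> \<Omega>)" "g ` (I \<times> \<Omega>) \<subseteq> \<Omega>"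
    using infinite_absorbs_Times[OF assms(3,8)] by blast
  from assms(4) show ?thesis
  proof
    assume E: "E = End_ring R (direct_sum_mod \<Omega> M)"
    interpret block_decomposition R M \<Omega> True "direct_sum_mod \<Omega> M" I g
      by (intro block_decomposition.intro power_module.intro power_module_axioms.intro
          block_decomposition_axioms.intro assms(1) g) (simp_all add: direct_sum_mod_def)
    show ?thesis
      using assms(5-7) unfolding E by (rule covering_subring_chain_improper)
  next
    assume E: "E = End_ring R (direct_prod_mod \<Omega> M)"
    interpret block_decomposition R M \<Omega> False "direct_prod_mod \<Omega> M" I g
      by (intro block_decomposition.intro power_module.intro power_module_axioms.intro
          block_decomposition_axioms.intro assms(1) g) (simp_all add: direct_prod_mod_def)
    show ?thesis
      using assms(5-7) unfolding E by (rule covering_subring_chain_improper)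
  qed
qed

end
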